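(* If $B,C\in \mathcal{B}_{A}(\mathcal{H})$, then \begin{align*} d\omega _{A_{0}}^{2}\left( \begin{bmatrix} 0 & B \\ C & 0 \end{bmatrix} \right) &\leq \frac{1}{4}\max \left\{ \omega _{A}\left( BB^{\sharp _{A}}+C^{\sharp _{A}}C+4\left( C^{\sharp _{A}}C\right) ^{2}\right) ,\omega _{A}\left( B^{\sharp _{A}}B+CC^{\sharp _{A}}+4\left( B^{\sharp _{A}}B\right) ^{2}\right) \right\} \\ &\quad +\frac{1}{2}\max \left\{ \omega _{A}\left( BC\right) ,\omega _{A}\left( CB\right) \right\}. \end{align*}
   Context: $\mathcal{H}$ is a complex Hilbert space and $A\in\mathcal{B}(\mathcal{H})$ is a positive operator; $\langle x,z\rangle_A=\langle Ax,z\rangle$ and $\|z\|_A=\|A^{1/2}z\|$. $\mathcal{B}_A(\mathcal{H})$ denotes the set of bounded operators $S$ on $\mathcal{H}$ admitting an $A$-adjoint; $S^{\sharp_A}=A^{\dagger}S^*A$ is the distinguished $A$-adjoint ($A^\dagger$ the Moore-Penrose inverse). $\omega_A(S)=\sup\{|\langle Sz,z\rangle_A|:\|z\|_A=1\}$ is the $A$-numerical radius. $A_0=\begin{bmatrix} A&0\\0&A\end{bmatrix}$ on $\mathcal{H}\oplus\mathcal{H}$ induces $\langle x,z\rangle_{A_0}=\langle x_1,z_1\rangle_A+\langle x_2,z_2\rangle_A$, and $d\omega_{A_0}(X)=\sup\{(|\langle Xz,z\rangle_{A_0}|^2+\|Xz\|_{A_0}^4)^{1/2}:\|z\|_{A_0}=1\}$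 is the $A_0$-Davis-Wielandt radius. *)

theory Defs
  imports Complex_Main
begin

text \<open>Complex inner product spaces (HOL has only real ones); Hilbert = complete.\<close>
class complex_inner = real_normed_vector +
  fixes scaleC :: "complex \<Rightarrow> 'a \<Rightarrow> 'a"
    and cinner :: "'a \<Rightarrow> 'a \<Rightarrow> complex"
  assumes scaleC_add_right: "scaleC a (x + y) = scaleC a x + scaleC a y"
    and scaleC_add_left: "scaleC (a + b) x = scaleC a x + scaleC b x"
    and scaleC_scaleC: "scaleC a (scaleC b x) = scaleC (a * b) x"
    and scaleC_one: "scaleC 1 x = x"
    and scaleR_scaleC: "scaleR r x = scaleC (of_real r) x"
    and cinner_add_left: "cinner (x + y) z = cinner x z + cinner y z"
    and cinner_scaleC_left: "cinner (scaleC a x) y = a * cinner x y"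
    and cinner_commute: "cinner y x = cnj (cinner x y)"
    and cinner_ge_zero: "0 \<le> Re (cinner x x)"
    and cinner_eq_zero_iff: "cinner x x = 0 \<longleftrightarrow> x = 0"
    and norm_eq_sqrt_cinner: "norm x = sqrt (Re (cinner x x))"

class chilbert_space = complex_inner + complete_space

definition clinear :: "('a::complex_inner \<Rightarrow> 'b::complex_inner) \<Rightarrow> bool" where
  "clinear T \<longleftrightarrow> (\<forall>x y. T (x + y) = T x + T y) \<and> (\<forall>c x. T (scaleC c x) = scaleC c (T x))"

definition bounded_clinear :: "('a::complex_inner \<Rightarrow> 'b::complex_inner) \<Rightarrow> bool" where
  "bounded_clinear T \<longleftrightarrow> clinear T \<and> (\<exists>K. \<forall>x. norm (T x) \<le> norm x * K)"

text \<open>Hilbert-space adjoint S* (exists and is unique for bounded S on a Hilbert space).\<close>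
definition adj :: "('a::complex_inner \<Rightarrow> 'a) \<Rightarrow> 'a \<Rightarrow> 'a" where
  "adj S = (SOME T. \<forall>x y. cinner (S x) y = cinner x (T y))"

definition positive_op :: "('a::complex_inner \<Rightarrow> 'a) \<Rightarrow> bool" where
  "positive_op A \<longleftrightarrow> bounded_clinear A \<and>
     (\<forall>x. Im (cinner (A x) x) = 0 \<and> 0 \<le> Re (cinner (A x) x))"

definition orth :: "'a::complex_inner set \<Rightarrow> 'a set" where
  "orth S = {x. \<forall>s\<in>S. cinner x s = 0}"

text \<open>Moore-Penrose inverse (Nashed): on R(A) + R(A)^perp, A^dagger y is the unique
  x in N(A)^perp with y = A x + z, z in R(A)^perp.\<close>
definition mp_inv :: "('a::complex_inner \<Rightarrow> 'a) \<Rightarrow> 'a \<Rightarrow> 'a" where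
  "mp_inv A y = (THE x. x \<in> orth {w. A w = 0} \<and> (\<exists>z\<in>orth (range A). y = A x + z))"

definition ainner :: "('a::complex_inner \<Rightarrow> 'a) \<Rightarrow> 'a \<Rightarrow> 'a \<Rightarrow> complex" where
  "ainner A x z = cinner (A x) z"

definition anorm :: "('a::complex_inner \<Rightarrow> 'a) \<Rightarrow> 'a \<Rightarrow> real" where
  "anorm A z = sqrt (Re (cinner (A z) z))"

definition BA :: "('a::complex_inner \<Rightarrow> 'a) \<Rightarrow> ('a \<Rightarrow> 'a) set" where
  "BA A = {S. bounded_clinear S \<and>
      (\<exists>T. bounded_clinear T \<and> (\<forall>x y. ainner A (S x) y = ainner A x (T y)))}"

definition sharpA :: "('a::complex_inner \<Rightarrow> 'a) \<Rightarrow> ('a \<Rightarrow> 'a) \<Rightarrow> 'a \<Rightarrow> 'a" where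
  "sharpA A S = mp_inv A \<circ> adj S \<circ> A"

text \<open>A-numerical radius (supremum of nonnegative values; convention sup of empty set = 0).\<close>
definition omegaA :: "('a::complex_inner \<Rightarrow> 'a) \<Rightarrow> ('a \<Rightarrow> 'a) \<Rightarrow> real" where
  "omegaA A S = Sup (insert 0 {cmod (ainner A (S z) z) | z. anorm A z = 1})"

text \<open>Semi-inner product and seminorm on H \<oplus> H induced by A_0 = diag(A,A).\<close>
definition ainner0 :: "('a::complex_inner \<Rightarrow> 'a) \<Rightarrow> 'a \<times> 'a \<Rightarrow> 'a \<times> 'a \<Rightarrow> complex" where
  "ainner0 A x z = ainner A (fst x) (fst z) + ainner A (snd x) (snd z)"

definition anorm0 :: "('a::complex_inner \<Rightarrow> 'a) \<Rightarrow> 'a \<times> 'a \<Rightarrow> real" where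
  "anorm0 A z = sqrt (Re (ainner0 A z z))"

definition dwA0 :: "('a::complex_inner \<Rightarrow> 'a) \<Rightarrow> ('a \<times> 'a \<Rightarrow> 'a \<times> 'a) \<Rightarrow> real" where
  "dwA0 A X = Sup (insert 0 {sqrt ((cmod (ainner0 A (X z) z))\<^sup>2 + (anorm0 A (X z)) ^ 4) | z. anorm0 A z = 1})"

text \<open>Operator matrix [[0,B],[C,0]] on H \<oplus> H.\<close>
definition offdiag :: "('a \<Rightarrow> 'a) \<Rightarrow> ('a \<Rightarrow> 'a) \<Rightarrow> 'a \<times> 'a \<Rightarrow> 'a \<times> 'a" where
  "offdiag B C z = (B (snd z), C (fst z))"

end

theory Submission
  imports Defs "HOL-Library.Product_Plus"
begin

(* Write X = [[0,B],[C,0]] and let Y = [[0,TC],[TB,0]] be its A_0-adjoint, where TB, TC are bounded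
   A-adjoints of B, C.  For a unit vector z = (x,y), Buzano's inequality and AM-GM give
   |<Xz,z>|^2 <= (|Xz|^2 + |Yz|^2)/4 + |<Xz,Yz>|/2, and |Xz|^2 = <YXz,z> <= |YXz| bounds |Xz|^4.
   Expanding the components, |Xz|^2 + |Yz|^2 + 4|YXz|^2 is the A-quadratic form of
   B TB + TC C + 4 (TC C)^2 at x plus that of TB B + C TC + 4 (TB B)^2 at y, and
   <Xz,Yz> = <BCx,x> + <CBy,y>.  Bounding each quadratic form by the A-numerical radius times
   |x|^2 or |y|^2, and using |x|^2 + |y|^2 = 1, yields the two maxima.  Finally A S^# = A T for
   every A-adjoint T of S, so the numerical radii may be computed with TB, TC in place of the
   distinguished adjoints. *)

section \<open>Elementary inequalities\<close>

lemma le_mult_if_quadratic_nonneg: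
  fixes a b c :: real
  assumes "0 \<le> b" and nonneg: "\<And>s. 0 \<le> a - 2 * s * c + s\<^sup>2 * c * b"
  shows "c \<le> a * b"
proof (cases "b = 0")
  case True
  show ?thesis
  proof (rule ccontr)
    assume "\<not> c \<le> a * b"
    then have "c > 0" using True by simp
    have "0 \<le> a - 2 * ((a + 1) / (2 * c)) * c" using nonneg[of "(a + 1) / (2 * c)"] True by simp
    also have "\<dots> = -1" using \<open>c > 0\<close> by (simp add: field_simps)
    finally show False by simp
  qed
next
  case False
  then have "b > 0" using assms(1) by simp
  have "0 \<le> a - 2 * (1 / b) * c + (1 / b)\<^sup>2 * c * b" by (rule nonneg)
  also have "\<dots> = a - c / b" using \<open>b > 0\<close> by (simp add: field_simps power2_eq_square)
  finally show ?thesis using \<open>b > 0\<close> by (simp add: field_simps)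
qed

lemma le_if_pow2_bounded:
  fixes x L C :: real
  assumes "0 < L" and bound: "\<And>k. x ^ (2 ^ k) \<le> C * L ^ (2 ^ k)"
  shows "x \<le> L"
proof (rule ccontr)
  assume "\<not> x \<le> L"
  then have q: "1 < x / L" using \<open>0 < L\<close> by simp
  then obtain n where n: "C < (x / L) ^ n" using real_arch_pow by blast
  have "(x / L) ^ n \<le> (x / L) ^ (2 ^ n)"
    using q by (intro power_increasing) (simp_all add: less_imp_le[OF less_exp])
  also have "\<dots> \<le> C" using bound[of n] \<open>0 < L\<close> by (simp add: power_divide field_simps)
  finally show False using n by simp
qed

lemma convex_combination_le_max:
  fixes a b u v :: real
  assumes "0 \<le> a" "0 \<le> b" "a + b = 1"
  shows "u * a + v * b \<le> max u v"
proof -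
  have "u * a + v * b \<le> max u v * a + max u v * b"
    using assms by (intro add_mono mult_right_mono) simp_all
  then show ?thesis using assms(3) by (simp add: distrib_left[symmetric])
qed

lemma Sup_insert_0_sq_le:
  fixes S :: "real set"
  assumes "0 \<le> R" and "\<And>s. s \<in> S \<Longrightarrow> s \<le> sqrt R"
  shows "(Sup (insert 0 S))\<^sup>2 \<le> R"
proof -
  have "bdd_above (insert 0 S)" using assms by (intro bdd_aboveI[of _ "sqrt R"]) auto
  then have "0 \<le> Sup (insert 0 S)" by (intro cSup_upper) simp_all
  moreover have "Sup (insert 0 S) \<le> sqrt R" using assms by (intro cSup_least) auto
  ultimately show ?thesis using assms(1) by (metis power_mono real_sqrt_pow2)
qed

section \<open>Semi-inner products\<close>

locale semi_inner =
  fixes g :: "'v::ab_group_add \<Rightarrow> 'v \<Rightarrow> complex" and sc :: "complex \<Rightarrow> 'v \<Rightarrow> 'v"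
  assumes add_left: "g (x + y) z = g x z + g y z"
    and scale_left: "g (sc c x) y = c * g x y"
    and conj_sym: "g y x = cnj (g x y)"
    and Re_self_nonneg: "0 \<le> Re (g x x)"
begin

definition seminorm :: "'v \<Rightarrow> real" where
  "seminorm x = sqrt (Re (g x x))"

definition is_adjoint :: "('v \<Rightarrow> 'v) \<Rightarrow> ('v \<Rightarrow> 'v) \<Rightarrow> bool" where
  "is_adjoint S T \<longleftrightarrow> (\<forall>x y. g (S x) y = g x (T y))"

definition bounded_op :: "('v \<Rightarrow> 'v) \<Rightarrow> bool" where
  "bounded_op S \<longleftrightarrow> (\<exists>K\<ge>0. \<forall>x. seminorm (S x) \<le> K * seminorm x)"

lemma zero_left [simp]: "g 0 y = 0"
  using add_left[of 0 0 y] by simp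

lemma minus_left: "g (- x) y = - g x y"
  using add_left[of x "- x" y] by (simp add: eq_neg_iff_add_eq_0 add.commute)

lemma diff_left: "g (x - y) z = g x z - g y z"
  using add_left[of x "- y" z] by (simp add: minus_left)

lemma add_right: "g z (x + y) = g z x + g z y"
  using conj_sym[of z "x + y"] conj_sym[of z x] conj_sym[of z y] by (simp add: add_left)

lemma diff_right: "g z (x - y) = g z x - g z y"
  using conj_sym[of z "x - y"] conj_sym[of z x] conj_sym[of z y] by (simp add: diff_left)

lemma scale_right: "g x (sc c y) = cnj c * g x y"
  using conj_sym[of x "sc c y"] conj_sym[of x y] by (simp add: scale_left)

lemma zero_right [simp]: "g x 0 = 0"
  using conj_sym[of x 0] by simp

lemma seminorm_nonneg: "0 \<le> seminorm x"
  using Re_self_nonneg by (simp add: seminorm_def)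

lemma seminorm_sq: "(seminorm x)\<^sup>2 = Re (g x x)"
  by (simp add: seminorm_def Re_self_nonneg)

lemma self_eq_seminorm_sq: "g x x = of_real ((seminorm x)\<^sup>2)"
proof -
  have "Im (g x x) = 0" using arg_cong[where f = Im, OF conj_sym[of x x]] by simp
  then show ?thesis by (simp add: seminorm_sq complex_eq_iff)
qed

lemma seminorm_scale: "seminorm (sc c x) = cmod c * seminorm x"
proof -
  have "g (sc c x) (sc c x) = of_real ((cmod c)\<^sup>2) * g x x"
    by (simp add: scale_left scale_right complex_norm_square del: of_real_power)
  then have "(seminorm (sc c x))\<^sup>2 = (cmod c * seminorm x)\<^sup>2"
    by (simp add: seminorm_sq power_mult_distrib)
  then show ?thesis by (simp add: seminorm_nonneg power2_eq_iff_nonneg)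
qed

lemma Re_self_diff_scale:
  "Re (g (x - sc (of_real s * g x y) y) (x - sc (of_real s * g x y) y))
     = Re (g x x) - 2 * s * (cmod (g x y))\<^sup>2 + s\<^sup>2 * (cmod (g x y))\<^sup>2 * Re (g y y)"
proof -
  let ?p = "g x y"
  have "g (x - sc (of_real s * ?p) y) (x - sc (of_real s * ?p) y)
      = g x x - of_real s * (cnj ?p * ?p) - of_real s * (?p * cnj ?p) + of_real (s\<^sup>2) * (?p * cnj ?p) * g y y"
    by (simp add: diff_left diff_right scale_left scale_right conj_sym[where x = x and y = y]
        algebra_simps power2_eq_square)
  then show ?thesis
    by (simp add: complex_norm_square[symmetric] mult.commute[of "cnj ?p"] del: of_real_power)
qed

theorem cauchy_schwarz: "cmod (g x y) \<le> seminorm x * seminorm y"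
proof -
  have "(cmod (g x y))\<^sup>2 \<le> Re (g x x) * Re (g y y)"
  proof (rule le_mult_if_quadratic_nonneg[OF Re_self_nonneg])
    fix s
    show "0 \<le> Re (g x x) - 2 * s * (cmod (g x y))\<^sup>2 + s\<^sup>2 * (cmod (g x y))\<^sup>2 * Re (g y y)"
      using Re_self_nonneg by (simp add: Re_self_diff_scale[symmetric])
  qed
  then have "(cmod (g x y))\<^sup>2 \<le> (seminorm x * seminorm y)\<^sup>2"
    by (simp add: power_mult_distrib seminorm_sq)
  then show ?thesis using seminorm_nonneg by (meson mult_nonneg_nonneg power2_le_imp_le)
qed

lemma seminorm_add_le: "seminorm (x + y) \<le> seminorm x + seminorm y"
proof -
  have "(seminorm (x + y))\<^sup>2 = (seminorm x)\<^sup>2 + 2 * Re (g x y) + (seminorm y)\<^sup>2"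
    by (simp add: seminorm_sq add_left add_right conj_sym[where x = x and y = y])
  also have "\<dots> \<le> (seminorm x + seminorm y)\<^sup>2"
    using complex_Re_le_cmod[of "g x y"] cauchy_schwarz[of x y] by (simp add: power2_sum)
  finally show ?thesis by (meson seminorm_nonneg add_nonneg_nonneg power2_le_imp_le)
qed

text \<open>Cauchy-Schwarz applied to the reflection \<open>w\<close> of \<open>b\<close> in the line of \<open>e\<close>.\<close>
theorem buzano:
  assumes e: "g e e = 1"
  shows "2 * cmod (g a e * g e b) \<le> seminorm a * seminorm b + cmod (g a b)"
proof -
  define w where "w = sc (2 * g b e) e - b"
  have geb: "g e b = cnj (g b e)" by (rule conj_sym)
  have "g w w = 4 * (g b e * cnj (g b e)) * g e e - 2 * g b e * g e b - 2 * cnj (g b e) * g b e + g b b"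
    unfolding w_def by (simp add: diff_left diff_right scale_left scale_right algebra_simps)
  then have "g w w = g b b" using e geb by (simp add: algebra_simps)
  then have seminorm_w: "seminorm w = seminorm b" by (simp add: seminorm_def)
  have "g a w = 2 * (g a e * g e b) - g a b"
    unfolding w_def using geb by (simp add: diff_right scale_right)
  then have "cmod (2 * (g a e * g e b)) \<le> cmod (g a w) + cmod (g a b)"
    using norm_triangle_ineq[of "g a w" "g a b"] by simp
  also have "\<dots> \<le> seminorm a * seminorm b + cmod (g a b)"
    using cauchy_schwarz[of a w] seminorm_w by simp
  finally show ?thesis by (simp add: norm_mult)
qed

lemma eq_0_if_minimal:
  assumes "\<And>t. Re (g u u) \<le> Re (g (u - sc t y) (u - sc t y))"
  shows "g u y = 0"
proof -
  have "(cmod (g u y))\<^sup>2 \<le> 0 * Re (g y y)"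
  proof (rule le_mult_if_quadratic_nonneg[OF Re_self_nonneg])
    fix s
    show "0 \<le> 0 - 2 * s * (cmod (g u y))\<^sup>2 + s\<^sup>2 * (cmod (g u y))\<^sup>2 * Re (g y y)"
      using assms[of "of_real s * g u y"] by (simp add: Re_self_diff_scale)
  qed
  then show ?thesis by simp
qed

lemma is_adjoint_swap: "is_adjoint S T \<Longrightarrow> is_adjoint T S"
  unfolding is_adjoint_def by (metis conj_sym)

lemma is_adjoint_compose: "is_adjoint S T \<Longrightarrow> is_adjoint S' T' \<Longrightarrow> is_adjoint (S \<circ> S') (T' \<circ> T)"
  by (simp add: is_adjoint_def)

lemma is_adjoint_funpow: "is_adjoint R R \<Longrightarrow> is_adjoint (R ^^ m) (R ^^ m)"
  by (induction m) (simp_all add: is_adjoint_def id_def funpow_swap1)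

lemma adjoint_quadratic_form: "is_adjoint S T \<Longrightarrow> g (S (T x)) x = of_real ((seminorm (T x))\<^sup>2)"
  by (simp add: is_adjoint_def self_eq_seminorm_sq)

lemma seminorm_le_if_adjoint_square:
  assumes "is_adjoint S T" and "0 \<le> K" and "seminorm (T (S z)) \<le> K * seminorm z"
  shows "seminorm (S z) \<le> sqrt K * seminorm z"
proof -
  have "(seminorm (S z))\<^sup>2 = Re (g z (T (S z)))"
    using assms(1) by (simp add: seminorm_sq is_adjoint_def)
  also have "\<dots> \<le> seminorm z * seminorm (T (S z))"
    using complex_Re_le_cmod cauchy_schwarz order_trans by blast
  also have "\<dots> \<le> K * (seminorm z)\<^sup>2"
    using mult_left_mono[OF assms(3) seminorm_nonneg[of z]] by (simp add: power2_eq_square mult_ac)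
  also have "\<dots> = (sqrt K * seminorm z)\<^sup>2"
    using assms(2) by (simp add: power_mult_distrib)
  finally show ?thesis using assms(2) by (meson seminorm_nonneg mult_nonneg_nonneg real_sqrt_ge_zero power2_le_imp_le)
qed

text \<open>Iterating \<open>seminorm (R x)\<^sup>2 \<le> seminorm x * seminorm (R (R x))\<close> bounds the \<open>2\<^sup>k\<close>-th power of
  \<open>seminorm (R z)\<close> by \<open>seminorm ((R ^^ 2\<^sup>k) z)\<close>; any geometric growth rate \<open>K\<close> of the latter
  is therefore a bound for \<open>R\<close>.\<close>
lemma seminorm_le_if_self_adjoint_growth:
  assumes adj: "is_adjoint R R" and "0 < K" and growth: "\<And>m. seminorm ((R ^^ m) z) \<le> c * K ^ m"
  shows "seminorm (R z) \<le> K * seminorm z"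
proof -
  have square: "(seminorm ((R ^^ m) z))\<^sup>2 \<le> seminorm z * seminorm ((R ^^ (2 * m)) z)" for m
  proof -
    have "(seminorm ((R ^^ m) z))\<^sup>2 = Re (g z ((R ^^ m) ((R ^^ m) z)))"
      using is_adjoint_funpow[OF adj, of m] by (simp add: seminorm_sq is_adjoint_def)
    also have "\<dots> \<le> seminorm z * seminorm ((R ^^ m) ((R ^^ m) z))"
      using complex_Re_le_cmod cauchy_schwarz order_trans by blast
    finally show ?thesis by (simp add: mult_2 funpow_add)
  qed
  show ?thesis
  proof (cases "seminorm z = 0")
    case True
    then show ?thesis using square[of 1] by simp
  next
    case False
    then have n: "0 < seminorm z" using seminorm_nonneg[of z] by simp
    define q where "q = seminorm (R z) / seminorm z"
    have q_pow: "q ^ (2 ^ k) \<le> seminorm ((R ^^ (2 ^ k)) z) / seminorm z" for k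
    proof (induction k)
      case 0
      then show ?case by (simp add: q_def)
    next
      case (Suc k)
      have "q ^ (2 ^ Suc k) = (q ^ (2 ^ k))\<^sup>2" by (simp add: power_mult[symmetric] mult.commute)
      also have "\<dots> \<le> (seminorm ((R ^^ (2 ^ k)) z) / seminorm z)\<^sup>2"
        using Suc.IH n by (intro power_mono) (simp_all add: q_def seminorm_nonneg)
      also have "\<dots> \<le> seminorm ((R ^^ (2 ^ Suc k)) z) / seminorm z"
        using square[of "2 ^ k"] n by (simp add: power_divide field_simps power2_eq_square)
      finally show ?case .
    qed
    have "q \<le> K"
    proof (rule le_if_pow2_bounded[OF \<open>0 < K\<close>])
      fix k
      show "q ^ (2 ^ k) \<le> c / seminorm z * K ^ (2 ^ k)"
        using q_pow[of k] growth[of "2 ^ k"] n by (simp add: field_simps)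
    qed
    then show ?thesis using n by (simp add: q_def field_simps)
  qed
qed

lemma bounded_op_compose:
  assumes "bounded_op S" and "bounded_op T"
  shows "bounded_op (\<lambda>x. S (T x))"
proof -
  obtain K L where "0 \<le> K" and K: "\<And>x. seminorm (S x) \<le> K * seminorm x"
    and "0 \<le> L" and L: "\<And>x. seminorm (T x) \<le> L * seminorm x"
    using assms unfolding bounded_op_def by blast
  have "seminorm (S (T x)) \<le> (K * L) * seminorm x" for x
  proof -
    have "seminorm (S (T x)) \<le> K * seminorm (T x)" by (rule K)
    also have "\<dots> \<le> K * (L * seminorm x)" by (rule mult_left_mono[OF L \<open>0 \<le> K\<close>])
    finally show ?thesis by (simp add: mult.assoc)
  qed
  then show ?thesis unfolding bounded_op_def using \<open>0 \<le> K\<close> \<open>0 \<le> L\<close> by (intro exI[of _ "K * L"]) simp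
qed

lemma bounded_op_add:
  assumes "bounded_op S" and "bounded_op T"
  shows "bounded_op (\<lambda>x. S x + T x)"
proof -
  obtain K L where "0 \<le> K" and K: "\<And>x. seminorm (S x) \<le> K * seminorm x"
    and "0 \<le> L" and L: "\<And>x. seminorm (T x) \<le> L * seminorm x"
    using assms unfolding bounded_op_def by blast
  have "seminorm (S x + T x) \<le> (K + L) * seminorm x" for x
    using seminorm_add_le[of "S x" "T x"] K[of x] L[of x] by (simp add: distrib_right)
  then show ?thesis unfolding bounded_op_def using \<open>0 \<le> K\<close> \<open>0 \<le> L\<close> by (intro exI[of _ "K + L"]) simp
qed

lemma bounded_op_scale:
  assumes "bounded_op S"
  shows "bounded_op (\<lambda>x. sc c (S x))"
proof -
  obtain K where "0 \<le> K" and K: "\<And>x. seminorm (S x) \<le> K * seminorm x"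
    using assms unfolding bounded_op_def by blast
  have "seminorm (sc c (S x)) \<le> (cmod c * K) * seminorm x" for x
    using mult_left_mono[OF K[of x] norm_ge_zero[of c]] by (simp add: seminorm_scale mult.assoc)
  then show ?thesis unfolding bounded_op_def using \<open>0 \<le> K\<close> by (intro exI[of _ "cmod c * K"]) simp
qed

lemma davis_wielandt_point_bound:
  assumes adj: "is_adjoint X Y" and e: "seminorm e = 1"
  shows "(cmod (g (X e) e))\<^sup>2 + (seminorm (X e)) ^ 4
    \<le> ((seminorm (X e))\<^sup>2 + (seminorm (Y e))\<^sup>2) / 4 + cmod (g (X e) (Y e)) / 2 + (seminorm (Y (X e)))\<^sup>2"
proof -
  have gee: "g e e = 1" using e by (simp add: self_eq_seminorm_sq)
  have "g (X e) e = g e (Y e)" using adj by (simp add: is_adjoint_def)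
  then have "2 * (cmod (g (X e) e))\<^sup>2 \<le> seminorm (X e) * seminorm (Y e) + cmod (g (X e) (Y e))"
    using buzano[OF gee, of "X e" "Y e"] by (simp add: norm_mult power2_eq_square)
  moreover have "2 * (seminorm (X e) * seminorm (Y e)) \<le> (seminorm (X e))\<^sup>2 + (seminorm (Y e))\<^sup>2"
    using sum_squares_bound[of "seminorm (X e)" "seminorm (Y e)"] by (simp add: power2_eq_square)
  moreover have "(seminorm (X e))\<^sup>2 \<le> seminorm (Y (X e))"
  proof -
    have "(seminorm (X e))\<^sup>2 = Re (g e (Y (X e)))"
      using adj by (simp add: seminorm_sq is_adjoint_def)
    also have "\<dots> \<le> seminorm e * seminorm (Y (X e))"
      using complex_Re_le_cmod cauchy_schwarz order_trans by blast
    finally show ?thesis using e by simp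
  qed
  then have "(seminorm (X e)) ^ 4 \<le> (seminorm (Y (X e)))\<^sup>2"
    using power_mono[of "(seminorm (X e))\<^sup>2" _ 2] by (simp add: power_mult[symmetric])
  ultimately show ?thesis by argo
qed

end

section \<open>Hilbert spaces\<close>

interpretation cinner: semi_inner "cinner :: 'a::complex_inner \<Rightarrow> 'a \<Rightarrow> complex" scaleC
  rewrites "semi_inner.seminorm cinner = norm"
proof -
  show "semi_inner (cinner :: 'a::complex_inner \<Rightarrow> 'a \<Rightarrow> complex) scaleC"
    by unfold_locales (auto simp: cinner_add_left cinner_scaleC_left cinner_ge_zero intro: cinner_commute)
  then show "semi_inner.seminorm (cinner :: 'a::complex_inner \<Rightarrow> 'a \<Rightarrow> complex) = norm"
    by (simp add: semi_inner.seminorm_def fun_eq_iff norm_eq_sqrt_cinner)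
qed

lemma cinner_ext: "(\<And>y. cinner u y = cinner v y) \<Longrightarrow> u = (v::'a::complex_inner)"
  using cinner_eq_zero_iff[of "u - v"] by (simp add: cinner.diff_left)

lemma clinear_add: "clinear T \<Longrightarrow> T (x + y) = T x + T y"
  unfolding clinear_def by blast

lemma clinear_scaleC: "clinear T \<Longrightarrow> T (scaleC c x) = scaleC c (T x)"
  unfolding clinear_def by blast

lemma scaleC_zero_right [simp]: "scaleC c (0::'a::complex_inner) = 0"
  using scaleC_add_right[of c "0::'a" 0] by simp

lemma bounded_linear_if_bounded_clinear: "bounded_clinear T \<Longrightarrow> bounded_linear T"
  unfolding bounded_clinear_def
  by (auto intro!: bounded_linear_intro simp: clinear_add clinear_scaleC scaleR_scaleC)

lemma closed_zero_set: "bounded_linear f \<Longrightarrow> closed {x. f x = 0}"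
  using bounded_linear.continuous_on[OF _ continuous_on_id]
  by (intro closed_Collect_eq) (auto intro: continuous_on_const)

lemma parallelogram_law:
  fixes a b :: "'a::complex_inner"
  shows "(norm (a + b))\<^sup>2 + (norm (a - b))\<^sup>2 = 2 * (norm a)\<^sup>2 + 2 * (norm b)\<^sup>2"
  by (simp add: cinner.seminorm_sq cinner_add_left cinner.add_right cinner.diff_left cinner.diff_right)

lemma Cauchy_if_minimizing:
  fixes f :: "nat \<Rightarrow> 'a::complex_inner"
  assumes midpoint: "\<And>m n. scaleR (1/2) (f m + f n) \<in> M"
    and lower: "\<And>y. y \<in> M \<Longrightarrow> d \<le> (norm (x - y))\<^sup>2"
    and minimizing: "\<And>n. (norm (x - f n))\<^sup>2 < d + inverse (real (Suc n))"
  shows "Cauchy f"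
proof (rule CauchyI)
  have dist_bound: "(norm (f m - f n))\<^sup>2 \<le> 2 * inverse (real (Suc m)) + 2 * inverse (real (Suc n))" for m n
  proof -
    have "(x - f n) + (x - f m) = scaleR 2 (x - scaleR (1/2) (f m + f n))"
      by (simp add: algebra_simps scaleR_2)
    then have "(norm ((x - f n) + (x - f m)))\<^sup>2 = 4 * (norm (x - scaleR (1/2) (f m + f n)))\<^sup>2"
      by (simp add: power_mult_distrib)
    moreover have "d \<le> (norm (x - scaleR (1/2) (f m + f n)))\<^sup>2" by (rule lower[OF midpoint])
    moreover have "(norm ((x - f n) + (x - f m)))\<^sup>2 + (norm (f m - f n))\<^sup>2
        = 2 * (norm (x - f n))\<^sup>2 + 2 * (norm (x - f m))\<^sup>2"
      using parallelogram_law[of "x - f n" "x - f m"] by simp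
    ultimately show ?thesis using minimizing[of m] minimizing[of n] by linarith
  qed
  fix e :: real
  assume "0 < e"
  then obtain N where N: "inverse (real (Suc N)) < e\<^sup>2 / 4"
    using reals_Archimedean[of "e\<^sup>2 / 4"] by auto
  have "norm (f m - f n) < e" if "N \<le> m" "N \<le> n" for m n
  proof -
    have "inverse (real (Suc m)) \<le> inverse (real (Suc N))" "inverse (real (Suc n)) \<le> inverse (real (Suc N))"
      using that by (simp_all add: le_imp_inverse_le)
    then have "(norm (f m - f n))\<^sup>2 < e\<^sup>2" using dist_bound[of m n] N by linarith
    then show ?thesis using \<open>0 < e\<close> by (simp add: power_less_imp_less_base)
  qed
  then show "\<exists>N. \<forall>m\<ge>N. \<forall>n\<ge>N. norm (f m - f n) < e" by blast
qed

lemma nearest_point_exists: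
  fixes M :: "'a::chilbert_space set"
  assumes "closed M" and "M \<noteq> {}"
    and midpoint: "\<And>u v. u \<in> M \<Longrightarrow> v \<in> M \<Longrightarrow> scaleR (1/2) (u + v) \<in> M"
  shows "\<exists>m\<in>M. \<forall>y\<in>M. norm (x - m) \<le> norm (x - y)"
proof -
  define D where "D = {(norm (x - y))\<^sup>2 | y. y \<in> M}"
  have bdd: "bdd_below D" unfolding D_def by (rule bdd_belowI[of _ 0]) auto
  have lower: "Inf D \<le> (norm (x - y))\<^sup>2" if "y \<in> M" for y
    unfolding D_def using that D_def bdd by (intro cInf_lower) auto
  have "\<exists>y\<in>M. (norm (x - y))\<^sup>2 < Inf D + inverse (real (Suc n))" for n
    using cInf_lessD[of D "Inf D + inverse (real (Suc n))"] assms(2) unfolding D_def by auto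
  then obtain f where f: "\<And>n. f n \<in> M" "\<And>n. (norm (x - f n))\<^sup>2 < Inf D + inverse (real (Suc n))"
    by metis
  have "Cauchy f"
    by (rule Cauchy_if_minimizing[where M = M]) (use f midpoint lower in auto)
  then obtain m where lim: "f \<longlonglongrightarrow> m" using Cauchy_convergent convergent_def by blast
  have "m \<in> M" using closed_sequentially[OF assms(1) f(1) lim] .
  moreover have "(norm (x - m))\<^sup>2 \<le> Inf D"
  proof (rule LIMSEQ_le)
    show "(\<lambda>n. (norm (x - f n))\<^sup>2) \<longlonglongrightarrow> (norm (x - m))\<^sup>2" by (intro tendsto_intros lim)
    show "(\<lambda>n. Inf D + inverse (real (Suc n))) \<longlonglongrightarrow> Inf D"
      using tendsto_add[OF tendsto_const LIMSEQ_inverse_real_of_nat] by simp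
  qed (use f(2) less_imp_le in auto)
  ultimately show ?thesis using lower by (meson norm_ge_zero order_trans power2_le_imp_le)
qed

theorem orthogonal_projection_exists:
  fixes M :: "'a::chilbert_space set"
  assumes "closed M" and "0 \<in> M" and add: "\<And>x y. x \<in> M \<Longrightarrow> y \<in> M \<Longrightarrow> x + y \<in> M"
    and scale: "\<And>c x. x \<in> M \<Longrightarrow> scaleC c x \<in> M"
  shows "\<exists>m\<in>M. \<forall>y\<in>M. cinner (x - m) y = 0"
proof -
  have midpoint: "scaleR (1/2) (u + v) \<in> M" if "u \<in> M" "v \<in> M" for u v
    using scale[OF add[OF that]] by (simp add: scaleR_scaleC)
  obtain m where "m \<in> M" and nearest: "\<And>y. y \<in> M \<Longrightarrow> norm (x - m) \<le> norm (x - y)"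
    using nearest_point_exists[OF assms(1) _ midpoint, of x] assms(2) by blast
  have "cinner (x - m) y = 0" if "y \<in> M" for y
  proof (rule cinner.eq_0_if_minimal)
    fix t
    have "norm (x - m) \<le> norm (x - m - scaleC t y)"
      using nearest[OF add[OF \<open>m \<in> M\<close> scale[OF that]]] by (simp add: algebra_simps)
    then show "Re (cinner (x - m) (x - m)) \<le> Re (cinner (x - m - scaleC t y) (x - m - scaleC t y))"
      unfolding cinner.seminorm_sq[symmetric] by (simp add: power_mono)
  qed
  with \<open>m \<in> M\<close> show ?thesis by blast
qed

theorem riesz_representation:
  fixes f :: "'a::chilbert_space \<Rightarrow> complex"
  assumes add: "\<And>x y. f (x + y) = f x + f y" and scale: "\<And>c x. f (scaleC c x) = c * f x"
    and bound: "\<And>x. cmod (f x) \<le> norm x * K"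
  shows "\<exists>v. \<forall>x. f x = cinner x v"
proof (cases "\<forall>x. f x = 0")
  case True
  then show ?thesis by (intro exI[of _ 0]) simp
next
  case False
  then obtain x0 where "f x0 \<noteq> 0" by blast
  have "bounded_linear f"
    by (rule bounded_linear_intro[where K = K]) (simp_all add: add scale scaleR_scaleC bound scaleR_conv_of_real)
  have f0: "f 0 = 0" using add[of 0 0] by simp
  obtain m where "f m = 0" and orth: "\<And>y. f y = 0 \<Longrightarrow> cinner (x0 - m) y = 0"
    using orthogonal_projection_exists[OF closed_zero_set[OF \<open>bounded_linear f\<close>], of x0] f0
    by (auto simp: add scale)
  define u where "u = x0 - m"
  have "f u = f x0" unfolding u_def using add[of "x0 - m" m] \<open>f m = 0\<close> by simp
  then have "cinner u u \<noteq> 0" using \<open>f x0 \<noteq> 0\<close> f0 cinner_eq_zero_iff by metis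
  have "f x = cinner x (scaleC (cnj (f u / cinner u u)) u)" for x
  proof -
    define w where "w = scaleC (f x) u - scaleC (f u) x"
    have "f w = 0" unfolding w_def using add[of "scaleC (f x) u - scaleC (f u) x" "scaleC (f u) x"]
      by (simp add: scale)
    then have "cinner w u = 0" using orth[of w] cinner_commute[of u w] unfolding u_def by simp
    then have "f x * cinner u u = f u * cinner x u"
      unfolding w_def by (simp add: cinner.diff_left cinner_scaleC_left)
    then show ?thesis using \<open>cinner u u \<noteq> 0\<close> by (simp add: cinner.scale_right field_simps)
  qed
  then show ?thesis by blast
qed

lemma adj_property:
  fixes S :: "'a::chilbert_space \<Rightarrow> 'a"
  assumes "bounded_clinear S"
  shows "cinner (S x) y = cinner x (adj S y)"
proof -
  obtain K where K: "\<And>x. norm (S x) \<le> norm x * K" and "clinear S"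
    using assms unfolding bounded_clinear_def by blast
  have "\<exists>v. \<forall>x. cinner (S x) y = cinner x v" for y
  proof (rule riesz_representation[where K = "K * norm y"])
    fix x
    show "cmod (cinner (S x) y) \<le> norm x * (K * norm y)"
      using cinner.cauchy_schwarz[of "S x" y] mult_right_mono[OF K[of x] norm_ge_zero[of y]]
      by (simp add: mult.assoc)
  qed (simp_all add: clinear_add[OF \<open>clinear S\<close>] clinear_scaleC[OF \<open>clinear S\<close>]
      cinner_add_left cinner_scaleC_left)
  then have "\<exists>T. \<forall>x y. cinner (S x) y = cinner x (T y)" by metis
  from someI_ex[OF this] show ?thesis unfolding adj_def by blast
qed

text \<open>On the range of \<open>A\<close> the Moore-Penrose inverse is well defined: \<open>A\<^sup>\<dagger> (A w)\<close> is the component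
  of \<open>w\<close> orthogonal to the kernel of \<open>A\<close>.\<close>
lemma mp_inv_range:
  fixes A :: "'a::chilbert_space \<Rightarrow> 'a"
  assumes "bounded_clinear A"
  shows "A (mp_inv A (A w)) = A w"
proof -
  let ?N = "{v. A v = 0}"
  have bl: "bounded_linear A" by (rule bounded_linear_if_bounded_clinear[OF assms])
  then have lin: "linear A" by (rule bounded_linear.linear)
  have "\<exists>n\<in>?N. \<forall>y\<in>?N. cinner (w - n) y = 0"
    using assms unfolding bounded_clinear_def
    by (intro orthogonal_projection_exists closed_zero_set[OF bl])
      (auto simp: linear_add[OF lin] linear_0[OF lin] clinear_scaleC)
  then obtain n where "A n = 0" and orth_n: "\<And>y. A y = 0 \<Longrightarrow> cinner (w - n) y = 0" by auto
  define P where "P x \<longleftrightarrow> x \<in> orth ?N \<and> (\<exists>z\<in>orth (range A). A w = A x + z)" for x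
  have P_A: "A x = A w" if "P x" for x
  proof -
    obtain z where z: "z \<in> orth (range A)" and e: "A w = A x + z" using \<open>P x\<close> unfolding P_def by blast
    have "z = A (w - x)" using e by (simp add: linear_diff[OF lin])
    then have "cinner z z = 0" using z unfolding orth_def by blast
    then have "z = 0" using cinner_eq_zero_iff by blast
    then show ?thesis using e by simp
  qed
  have "P (w - n)"
    unfolding P_def orth_def using orth_n \<open>A n = 0\<close> by (auto simp: linear_diff[OF lin])
  moreover have "x1 = x2" if "P x1" "P x2" for x1 x2
  proof -
    have "A (x1 - x2) = 0" using P_A[OF that(1)] P_A[OF that(2)] by (simp add: linear_diff[OF lin])
    moreover have "x1 \<in> orth ?N" "x2 \<in> orth ?N" using that unfolding P_def by blast+
    ultimately have "cinner (x1 - x2) (x1 - x2) = 0"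
      unfolding orth_def by (simp add: cinner.diff_left)
    then have "x1 - x2 = 0" using cinner_eq_zero_iff by blast
    then show ?thesis by simp
  qed
  ultimately have "\<exists>!x. P x" by blast
  from theI'[OF this] have "P (mp_inv A (A w))" unfolding mp_inv_def P_def by simp
  then show ?thesis by (rule P_A)
qed

lemma omegaA_cong: "(\<And>x. A (S x) = A (S' x)) \<Longrightarrow> omegaA A S = omegaA A S'"
  by (simp add: omegaA_def ainner_def)

section \<open>Positive operators and the A-seminorm\<close>

locale positive_operator =
  fixes A :: "'a::complex_inner \<Rightarrow> 'a"
  assumes positive: "positive_op A"
begin

lemma bounded_clinear_A: "bounded_clinear A"
  using positive by (simp add: positive_op_def)

lemma clinear_A: "clinear A"
  using bounded_clinear_A by (simp add: bounded_clinear_def)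

lemma bounded_linear_A: "bounded_linear A"
  by (rule bounded_linear_if_bounded_clinear[OF bounded_clinear_A])

lemma linear_A: "linear A"
  by (rule bounded_linear.linear[OF bounded_linear_A])

text \<open>Polarization: a sesquilinear form whose diagonal is real is Hermitian.\<close>
lemma self_adjoint: "cinner (A x) y = cinner x (A y)"
proof -
  have real_diag: "cinner (A u) u = cinner u (A u)" for u
  proof -
    have "Im (cinner (A u) u) = 0" using positive by (simp add: positive_op_def)
    then show ?thesis using cinner_commute[of u "A u"] by (simp add: complex_eq_iff)
  qed
  note expand = clinear_add[OF clinear_A] clinear_scaleC[OF clinear_A] cinner_add_left
    cinner.add_right cinner_scaleC_left cinner.scale_right real_diag
  have sum: "cinner (A x) y + cinner (A y) x = cinner x (A y) + cinner y (A x)"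
    using real_diag[of "x + y"] by (simp add: expand algebra_simps)
  have "\<i> * (cinner (A y) x - cinner (A x) y) = \<i> * (cinner y (A x) - cinner x (A y))"
    using real_diag[of "x + scaleC \<i> y"] by (simp add: expand algebra_simps)
  then have diff: "cinner (A y) x - cinner (A x) y = cinner y (A x) - cinner x (A y)"
    by simp
  from sum diff show ?thesis by algebra
qed

end

definition scaleC_pair :: "complex \<Rightarrow> 'a::complex_inner \<times> 'a \<Rightarrow> 'a \<times> 'a" where
  "scaleC_pair c z = (scaleC c (fst z), scaleC c (snd z))"

sublocale positive_operator \<subseteq> A: semi_inner "ainner A" scaleC
  rewrites "semi_inner.seminorm (ainner A) = anorm A"
proof -
  show "semi_inner (ainner A) scaleC"
  proof
    fix x y z :: 'a and c
    show "ainner A (x + y) z = ainner A x z + ainner A y z"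
      by (simp add: ainner_def clinear_add[OF clinear_A] cinner_add_left)
    show "ainner A (scaleC c x) y = c * ainner A x y"
      by (simp add: ainner_def clinear_scaleC[OF clinear_A] cinner_scaleC_left)
    show "ainner A y x = cnj (ainner A x y)"
      by (simp add: ainner_def self_adjoint[of y x] cinner_commute[of "A x" y])
    show "0 \<le> Re (ainner A x x)"
      using positive by (simp add: positive_op_def ainner_def)
  qed
  then show "semi_inner.seminorm (ainner A) = anorm A"
    by (simp add: semi_inner.seminorm_def fun_eq_iff anorm_def ainner_def)
qed

sublocale positive_operator \<subseteq> A0: semi_inner "ainner0 A" scaleC_pair
  rewrites "semi_inner.seminorm (ainner0 A) = anorm0 A"
proof -
  show "semi_inner (ainner0 A) scaleC_pair"
  proof
    fix x y z :: "'a \<times> 'a" and c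
    show "ainner0 A (x + y) z = ainner0 A x z + ainner0 A y z"
      by (simp add: ainner0_def A.add_left)
    show "ainner0 A (scaleC_pair c x) y = c * ainner0 A x y"
      by (simp add: ainner0_def scaleC_pair_def A.scale_left distrib_left)
    show "ainner0 A y x = cnj (ainner0 A x y)"
      by (simp add: ainner0_def A.conj_sym[of "fst x"] A.conj_sym[of "snd x"])
    show "0 \<le> Re (ainner0 A x x)"
      using A.Re_self_nonneg[of "fst x"] A.Re_self_nonneg[of "snd x"] by (simp add: ainner0_def)
  qed
  then show "semi_inner.seminorm (ainner0 A) = anorm0 A"
    by (simp add: semi_inner.seminorm_def fun_eq_iff anorm0_def)
qed

context positive_operator
begin

lemma anorm0_sq: "(anorm0 A z)\<^sup>2 = (anorm A (fst z))\<^sup>2 + (anorm A (snd z))\<^sup>2"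
  by (simp add: A0.seminorm_sq A.seminorm_sq ainner0_def)

lemma BA_obtain_adjoint:
  assumes "S \<in> BA A"
  obtains T where "bounded_clinear S" "bounded_clinear T" "A.is_adjoint S T"
  using assms unfolding BA_def A.is_adjoint_def by blast

lemma A_eq_apply_if_adjoint:
  assumes "A.is_adjoint S T" and "A w = A w'"
  shows "A (S w) = A (S w')"
proof (rule cinner_ext)
  fix y
  show "cinner (A (S w)) y = cinner (A (S w')) y"
    using assms unfolding A.is_adjoint_def ainner_def by simp
qed

lemma anorm_le_norm: "\<exists>K\<ge>0. \<forall>w. anorm A w \<le> K * norm w"
proof -
  obtain K where "0 < K" and K: "\<And>x. norm (A x) \<le> norm x * K"
    using bounded_linear.pos_bounded[OF bounded_linear_A] by blast
  have "anorm A w \<le> sqrt K * norm w" for w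
  proof -
    have "(anorm A w)\<^sup>2 \<le> cmod (cinner (A w) w)"
      using complex_Re_le_cmod by (simp add: A.seminorm_sq ainner_def)
    also have "\<dots> \<le> norm (A w) * norm w" by (rule cinner.cauchy_schwarz)
    also have "\<dots> \<le> K * (norm w)\<^sup>2"
      using mult_right_mono[OF K[of w] norm_ge_zero[of w]] by (simp add: power2_eq_square mult_ac)
    also have "\<dots> = (sqrt K * norm w)\<^sup>2"
      using \<open>0 < K\<close> by (simp add: power_mult_distrib)
    finally show ?thesis
      by (rule power2_le_imp_le) (simp add: \<open>0 < K\<close> less_imp_le)
  qed
  then show ?thesis using \<open>0 < K\<close> by (intro exI[of _ "sqrt K"]) auto
qed

text \<open>\<open>T \<circ> S\<close> is \<open>A\<close>-selfadjoint, and its powers grow at most geometrically in norm, hence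
  also in the \<open>A\<close>-seminorm.\<close>
lemma bounded_op_if_adjoint:
  assumes S: "bounded_linear S" and T: "bounded_linear T" and adj: "A.is_adjoint S T"
  shows "A.bounded_op S"
proof -
  define R where "R = T \<circ> S"
  have "bounded_linear R" unfolding R_def comp_def by (rule bounded_linear_compose[OF T S])
  then obtain K where "0 < K" and K: "\<And>x. norm (R x) \<le> norm x * K"
    using bounded_linear.pos_bounded by blast
  obtain KA where "0 \<le> KA" and KA: "\<And>w. anorm A w \<le> KA * norm w"
    using anorm_le_norm by blast
  have norm_pow: "norm ((R ^^ m) z) \<le> K ^ m * norm z" for m z
  proof (induction m)
    case (Suc m)
    have "norm ((R ^^ Suc m) z) \<le> norm ((R ^^ m) z) * K" using K by simp
    also have "\<dots> \<le> K ^ m * norm z * K" using Suc.IH \<open>0 < K\<close> by (simp add: mult_right_mono)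
    finally show ?case by (simp add: mult_ac)
  qed simp
  have R_bound: "anorm A (R z) \<le> K * anorm A z" for z
  proof (rule A.seminorm_le_if_self_adjoint_growth[OF _ \<open>0 < K\<close>])
    show "A.is_adjoint R R"
      unfolding R_def by (rule A.is_adjoint_compose[OF A.is_adjoint_swap[OF adj] adj])
    show "anorm A ((R ^^ m) z) \<le> KA * norm z * K ^ m" for m
      using order_trans[OF KA mult_left_mono[OF norm_pow \<open>0 \<le> KA\<close>]] by (simp add: mult_ac)
  qed
  have "anorm A (S z) \<le> sqrt K * anorm A z" for z
    using A.seminorm_le_if_adjoint_square[OF adj _ R_bound[unfolded R_def comp_def]] \<open>0 < K\<close> by simp
  then show ?thesis using \<open>0 < K\<close> unfolding A.bounded_op_def by (intro exI[of _ "sqrt K"]) auto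
qed

lemma omegaA_set_bdd_above:
  assumes "A.bounded_op S"
  shows "bdd_above (insert 0 {cmod (ainner A (S z) z) | z. anorm A z = 1})"
proof -
  obtain K where "0 \<le> K" and K: "\<And>z. anorm A (S z) \<le> K * anorm A z"
    using assms unfolding A.bounded_op_def by blast
  have "cmod (ainner A (S z) z) \<le> K" if "anorm A z = 1" for z
    using A.cauchy_schwarz[of "S z" z] K[of z] that by simp
  then show ?thesis using \<open>0 \<le> K\<close> by (intro bdd_aboveI[of _ K]) auto
qed

lemma omegaA_nonneg: "A.bounded_op S \<Longrightarrow> 0 \<le> omegaA A S"
  unfolding omegaA_def by (rule cSup_upper[OF _ omegaA_set_bdd_above]) simp_all

lemma quadratic_form_le_omegaA:
  assumes "A.bounded_op S" and "linear S"
  shows "cmod (ainner A (S z) z) \<le> omegaA A S * (anorm A z)\<^sup>2"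
proof (cases "anorm A z = 0")
  case True
  then show ?thesis using A.cauchy_schwarz[of "S z" z] by simp
next
  case False
  then have n: "0 < anorm A z" using A.seminorm_nonneg[of z] by simp
  define u where "u = scaleR (1 / anorm A z) z"
  have "anorm A u = 1" using n by (simp add: u_def scaleR_scaleC A.seminorm_scale norm_divide)
  then have "cmod (ainner A (S u) u) \<le> omegaA A S"
    unfolding omegaA_def by (intro cSup_upper[OF _ omegaA_set_bdd_above[OF assms(1)]]) blast
  moreover have "cmod (ainner A (S u) u) = cmod (ainner A (S z) z) / (anorm A z)\<^sup>2"
    unfolding u_def linear_scale[OF assms(2)] using n
    by (simp add: scaleR_scaleC A.scale_left A.scale_right norm_mult norm_divide power2_eq_square)
  ultimately show ?thesis using n by (simp add: field_simps)
qed

end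

section \<open>The off-diagonal operator matrix\<close>

context positive_operator
begin

lemma cmod_quadratic_form_adjoint_sum:
  assumes "A.is_adjoint S T" and "A.is_adjoint U V"
  shows "cmod (ainner A (S (T x) + V (U x) + scaleR 4 (V (U (V (U x))))) x)
    = (anorm A (T x))\<^sup>2 + (anorm A (U x))\<^sup>2 + 4 * (anorm A (V (U x)))\<^sup>2"
proof -
  have VU: "A.is_adjoint V U" using assms(2) by (rule A.is_adjoint_swap)
  have "ainner A (S (T x) + V (U x) + scaleR 4 (V (U (V (U x))))) x
      = of_real ((anorm A (T x))\<^sup>2 + (anorm A (U x))\<^sup>2 + 4 * (anorm A (V (U x)))\<^sup>2)"
    using A.adjoint_quadratic_form[OF assms(1), of x] A.adjoint_quadratic_form[OF VU, of x]
      A.adjoint_quadratic_form[OF A.is_adjoint_compose[OF VU assms(2)], of x]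
    by (simp add: A.add_left scaleR_scaleC A.scale_left)
  then show ?thesis by (simp only: norm_of_real) (simp add: abs_of_nonneg)
qed

lemma offdiag_point_bound:
  assumes adjB: "A.is_adjoint B TB" and adjC: "A.is_adjoint C TC" and z: "anorm0 A (x, y) = 1"
  shows "(cmod (ainner0 A (offdiag B C (x, y)) (x, y)))\<^sup>2 + (anorm0 A (offdiag B C (x, y))) ^ 4
    \<le> 1/4 * (cmod (ainner A (B (TB x) + TC (C x) + scaleR 4 (TC (C (TC (C x))))) x)
             + cmod (ainner A (TB (B y) + C (TC y) + scaleR 4 (TB (B (TB (B y))))) y))
      + 1/2 * (cmod (ainner A (B (C x)) x) + cmod (ainner A (C (B y)) y))"
proof -
  have Q1: "cmod (ainner A (B (TB x) + TC (C x) + scaleR 4 (TC (C (TC (C x))))) x)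
      = (anorm A (TB x))\<^sup>2 + (anorm A (C x))\<^sup>2 + 4 * (anorm A (TC (C x)))\<^sup>2"
    using cmod_quadratic_form_adjoint_sum[OF adjB adjC] .
  have Q2: "cmod (ainner A (TB (B y) + C (TC y) + scaleR 4 (TB (B (TB (B y))))) y)
      = (anorm A (TC y))\<^sup>2 + (anorm A (B y))\<^sup>2 + 4 * (anorm A (TB (B y)))\<^sup>2"
    using cmod_quadratic_form_adjoint_sum[OF adjC adjB, of y]
    by (simp add: add.commute)
  have "ainner0 A (B y, C x) (TC y, TB x) = ainner A (B (C x)) x + ainner A (C (B y)) y"
    using adjB adjC by (simp add: ainner0_def A.is_adjoint_def add.commute)
  then have mixed: "cmod (ainner0 A (B y, C x) (TC y, TB x))
      \<le> cmod (ainner A (B (C x)) x) + cmod (ainner A (C (B y)) y)"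
    by (simp add: norm_triangle_ineq)
  have "A0.is_adjoint (offdiag B C) (offdiag TC TB)"
    using adjB adjC by (simp add: A0.is_adjoint_def A.is_adjoint_def ainner0_def offdiag_def add.commute)
  from A0.davis_wielandt_point_bound[OF this z]
  have "(cmod (ainner0 A (offdiag B C (x, y)) (x, y)))\<^sup>2 + (anorm0 A (offdiag B C (x, y))) ^ 4
      \<le> ((anorm0 A (B y, C x))\<^sup>2 + (anorm0 A (TC y, TB x))\<^sup>2) / 4
        + cmod (ainner0 A (B y, C x) (TC y, TB x)) / 2 + (anorm0 A (TC (C x), TB (B y)))\<^sup>2"
    by (simp add: offdiag_def)
  also have "\<dots> \<le> ((anorm0 A (B y, C x))\<^sup>2 + (anorm0 A (TC y, TB x))\<^sup>2) / 4
        + (cmod (ainner A (B (C x)) x) + cmod (ainner A (C (B y)) y)) / 2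
        + (anorm0 A (TC (C x), TB (B y)))\<^sup>2"
    using mixed by simp
  also have "\<dots> = 1/4 * (cmod (ainner A (B (TB x) + TC (C x) + scaleR 4 (TC (C (TC (C x))))) x)
             + cmod (ainner A (TB (B y) + C (TC y) + scaleR 4 (TB (B (TB (B y))))) y))
      + 1/2 * (cmod (ainner A (B (C x)) x) + cmod (ainner A (C (B y)) y))"
    unfolding Q1 Q2 anorm0_sq fst_conv snd_conv by (simp add: field_simps)
  finally show ?thesis .
qed

lemma dwA0_offdiag_sq_le:
  assumes "bounded_linear B" "bounded_linear C" "bounded_linear TB" "bounded_linear TC"
    and adjB: "A.is_adjoint B TB" and adjC: "A.is_adjoint C TC"
  shows "(dwA0 A (offdiag B C))\<^sup>2 \<le>
      1/4 * max (omegaA A (\<lambda>x. B (TB x) + TC (C x) + scaleR 4 (TC (C (TC (C x))))))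
                (omegaA A (\<lambda>x. TB (B x) + C (TC x) + scaleR 4 (TB (B (TB (B x))))))
    + 1/2 * max (omegaA A (B \<circ> C)) (omegaA A (C \<circ> B))"
proof -
  define Q1 where "Q1 = (\<lambda>x. B (TB x) + TC (C x) + scaleR 4 (TC (C (TC (C x)))))"
  define Q2 where "Q2 = (\<lambda>x. TB (B x) + C (TC x) + scaleR 4 (TB (B (TB (B x)))))"
  define R where
    "R = 1/4 * max (omegaA A Q1) (omegaA A Q2) + 1/2 * max (omegaA A (B \<circ> C)) (omegaA A (C \<circ> B))"
  have bounded: "A.bounded_op B" "A.bounded_op C" "A.bounded_op TB" "A.bounded_op TC"
    using bounded_op_if_adjoint[OF assms(1,3) adjB] bounded_op_if_adjoint[OF assms(2,4) adjC]
      bounded_op_if_adjoint[OF assms(3,1) A.is_adjoint_swap[OF adjB]]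
      bounded_op_if_adjoint[OF assms(4,2) A.is_adjoint_swap[OF adjC]] .
  have BTB: "A.bounded_op (\<lambda>x. B (TB x))" and TBB: "A.bounded_op (\<lambda>x. TB (B x))"
    and CTC: "A.bounded_op (\<lambda>x. C (TC x))" and TCC: "A.bounded_op (\<lambda>x. TC (C x))"
    and BC: "A.bounded_op (B \<circ> C)" and CB: "A.bounded_op (C \<circ> B)"
    using bounded by (simp_all add: A.bounded_op_compose comp_def)
  have ops: "A.bounded_op Q1" "A.bounded_op Q2" "A.bounded_op (B \<circ> C)" "A.bounded_op (C \<circ> B)"
    unfolding Q1_def Q2_def scaleR_scaleC
    using A.bounded_op_add[OF A.bounded_op_add[OF BTB TCC] A.bounded_op_scale[OF A.bounded_op_compose[OF TCC TCC]]]
      A.bounded_op_add[OF A.bounded_op_add[OF TBB CTC] A.bounded_op_scale[OF A.bounded_op_compose[OF TBB TBB]]]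
      BC CB by simp_all
  note lin = bounded_linear.linear[OF assms(1)] bounded_linear.linear[OF assms(2)]
    bounded_linear.linear[OF assms(3)] bounded_linear.linear[OF assms(4)]
  have linear: "linear Q1" "linear Q2" "linear (B \<circ> C)" "linear (C \<circ> B)"
    unfolding Q1_def Q2_def using lin
    by (auto intro!: linearI simp: linear_add linear_scale linear_compose scaleR_add_right)
  have "0 \<le> R" using omegaA_nonneg[OF ops(1)] omegaA_nonneg[OF ops(3)] by (simp add: R_def)
  have point: "(cmod (ainner0 A (offdiag B C z) z))\<^sup>2 + (anorm0 A (offdiag B C z)) ^ 4 \<le> R"
    if "anorm0 A z = 1" for z
  proof -
    obtain x y where z: "z = (x, y)" by fastforce
    have ab: "(anorm A x)\<^sup>2 + (anorm A y)\<^sup>2 = 1" using that anorm0_sq[of z] z by simp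
    have "(cmod (ainner0 A (offdiag B C z) z))\<^sup>2 + (anorm0 A (offdiag B C z)) ^ 4
        \<le> 1/4 * (cmod (ainner A (Q1 x) x) + cmod (ainner A (Q2 y) y))
          + 1/2 * (cmod (ainner A ((B \<circ> C) x) x) + cmod (ainner A ((C \<circ> B) y) y))"
      using offdiag_point_bound[OF adjB adjC that[unfolded z]] by (simp add: z Q1_def Q2_def)
    also have "\<dots> \<le> 1/4 * (omegaA A Q1 * (anorm A x)\<^sup>2 + omegaA A Q2 * (anorm A y)\<^sup>2)
          + 1/2 * (omegaA A (B \<circ> C) * (anorm A x)\<^sup>2 + omegaA A (C \<circ> B) * (anorm A y)\<^sup>2)"
      using ops linear by (intro add_mono mult_left_mono quadratic_form_le_omegaA) (simp_all add: comp_def)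
    also have "\<dots> \<le> R"
      unfolding R_def using ab by (intro add_mono mult_left_mono convex_combination_le_max) simp_all
    finally show ?thesis .
  qed
  have "(dwA0 A (offdiag B C))\<^sup>2 \<le> R"
    unfolding dwA0_def using \<open>0 \<le> R\<close> point
    by (intro Sup_insert_0_sq_le) (auto intro: real_sqrt_le_mono)
  then show ?thesis by (simp add: R_def Q1_def Q2_def)
qed

end

lemma A_apply_sharpA:
  fixes A :: "'a::chilbert_space \<Rightarrow> 'a"
  assumes "positive_op A" and "S \<in> BA A" and adj: "semi_inner.is_adjoint (ainner A) S T"
  shows "A (sharpA A S y) = A (T y)"
    and "A (S (sharpA A S y)) = A (S (T y))"
    and "A (sharpA A S (S (sharpA A S y))) = A (T (S (T y)))"
proof -
  interpret positive_operator A by unfold_locales (rule assms(1))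
  have "bounded_clinear S" using assms(2) by (simp add: BA_def)
  have sharp: "A (sharpA A S u) = A (T u)" for u
  proof -
    have "adj S (A u) = A (T u)"
    proof (rule cinner_ext)
      fix x
      have "cinner x (adj S (A u)) = cinner (S x) (A u)"
        by (rule adj_property[OF \<open>bounded_clinear S\<close>, symmetric])
      also have "\<dots> = ainner A (S x) u" by (simp add: ainner_def self_adjoint)
      also have "\<dots> = ainner A x (T u)" using adj by (simp add: A.is_adjoint_def)
      also have "\<dots> = cinner x (A (T u))" by (simp add: ainner_def self_adjoint)
      finally show "cinner (adj S (A u)) x = cinner (A (T u)) x" by (metis cinner_commute)
    qed
    then show ?thesis using mp_inv_range[OF bounded_clinear_A] by (simp add: sharpA_def)
  qed
  have S_sharp: "A (S (sharpA A S u)) = A (S (T u))" for u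
    by (rule A_eq_apply_if_adjoint[OF adj sharp])
  show "A (sharpA A S y) = A (T y)" by (rule sharp)
  show "A (S (sharpA A S y)) = A (S (T y))" by (rule S_sharp)
  show "A (sharpA A S (S (sharpA A S y))) = A (T (S (T y)))"
    using sharp A_eq_apply_if_adjoint[OF A.is_adjoint_swap[OF adj] S_sharp] by (rule trans)
qed

lemma omegaA_sharpA_forms:
  fixes A B C :: "'a::chilbert_space \<Rightarrow> 'a"
  assumes "positive_op A" and "B \<in> BA A" and "C \<in> BA A"
    and adjB: "semi_inner.is_adjoint (ainner A) B TB" and adjC: "semi_inner.is_adjoint (ainner A) C TC"
  shows "omegaA A (\<lambda>x. B (sharpA A B x) + sharpA A C (C x)
                            + scaleR 4 (sharpA A C (C (sharpA A C (C x)))))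
      = omegaA A (\<lambda>x. B (TB x) + TC (C x) + scaleR 4 (TC (C (TC (C x)))))"
    and "omegaA A (\<lambda>x. sharpA A B (B x) + C (sharpA A C x)
                            + scaleR 4 (sharpA A B (B (sharpA A B (B x)))))
      = omegaA A (\<lambda>x. TB (B x) + C (TC x) + scaleR 4 (TB (B (TB (B x)))))"
proof -
  interpret positive_operator A by unfold_locales (rule assms(1))
  note sharpB = A_apply_sharpA[OF assms(1,2) adjB] and sharpC = A_apply_sharpA[OF assms(1,3) adjC]
  note A_linear = linear_add[OF linear_A] linear_scale[OF linear_A]
  show "omegaA A (\<lambda>x. B (sharpA A B x) + sharpA A C (C x)
                            + scaleR 4 (sharpA A C (C (sharpA A C (C x)))))
      = omegaA A (\<lambda>x. B (TB x) + TC (C x) + scaleR 4 (TC (C (TC (C x)))))"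
  proof (rule omegaA_cong)
    fix x
    show "A (B (sharpA A B x) + sharpA A C (C x) + scaleR 4 (sharpA A C (C (sharpA A C (C x)))))
        = A (B (TB x) + TC (C x) + scaleR 4 (TC (C (TC (C x)))))"
      using sharpB(2)[of x] sharpC(1)[of "C x"] sharpC(3)[of "C x"] by (simp add: A_linear)
  qed
  show "omegaA A (\<lambda>x. sharpA A B (B x) + C (sharpA A C x)
                            + scaleR 4 (sharpA A B (B (sharpA A B (B x)))))
      = omegaA A (\<lambda>x. TB (B x) + C (TC x) + scaleR 4 (TB (B (TB (B x)))))"
  proof (rule omegaA_cong)
    fix x
    show "A (sharpA A B (B x) + C (sharpA A C x) + scaleR 4 (sharpA A B (B (sharpA A B (B x)))))
        = A (TB (B x) + C (TC x) + scaleR 4 (TB (B (TB (B x)))))"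
      using sharpB(1)[of "B x"] sharpB(3)[of "B x"] sharpC(2)[of x] by (simp add: A_linear)
  qed
qed

theorem theorem3p6:
  fixes A B C :: "'a::chilbert_space \<Rightarrow> 'a"
  assumes "positive_op A" and "B \<in> BA A" and "C \<in> BA A"
  shows "(dwA0 A (offdiag B C))\<^sup>2 \<le>
      1/4 * max (omegaA A (\<lambda>x. B (sharpA A B x) + sharpA A C (C x)
                               + scaleR 4 (sharpA A C (C (sharpA A C (C x))))))
                (omegaA A (\<lambda>x. sharpA A B (B x) + C (sharpA A C x)
                               + scaleR 4 (sharpA A B (B (sharpA A B (B x))))))
    + 1/2 * max (omegaA A (B \<circ> C)) (omegaA A (C \<circ> B))"
proof -
  interpret positive_operator A by unfold_locales (rule assms(1))
  obtain TB where B: "bounded_clinear B" "bounded_clinear TB" and adjB: "A.is_adjoint B TB"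
    using BA_obtain_adjoint[OF assms(2)] .
  obtain TC where C: "bounded_clinear C" "bounded_clinear TC" and adjC: "A.is_adjoint C TC"
    using BA_obtain_adjoint[OF assms(3)] .
  show ?thesis
    unfolding omegaA_sharpA_forms[OF assms adjB adjC]
    using B C by (intro dwA0_offdiag_sq_le adjB adjC bounded_linear_if_bounded_clinear)
qed

end
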